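(* For every $n\ge 1$, the number $b_n$ of distinct complete lines of play of Planted Brussels Sprouts whose initial state has $n$ arms is $b_n=n^{n-2}$.
   Context: Planted Brussels Sprouts of order $n$: start with a closed disk with $n$ marked points on its boundary circle, labeled $1,\dots,n$ in clockwise order. Attached to each marked point is an arm, a short segment pointing into the interior of the disk; these arms are free. A move consists of two steps. First, choose two free arms and join their free ends by a simple curve (an arc) in the disk that does not intersect any previously drawn arc or arm; the two joined arms cease to be free. Second, mark a point (a notch) on the arc, from which two new free arms emanate, one on each side of the arc. The game ends when no move is possible. A (complete) line of play is the sequence of moves from the initial state to the end of the game. Long labels: the original arm at point $i$ has long label $i$. If an arc joins arms with long labels $\alpha$ and $\beta$, the two new arms receive long labels $(\alpha,\beta)$ and $(\beta,\alpha)$, placed so that, going clockwise around the notch, one sees the old arm $\alpha$, the new arm $(\alpha,\beta)$, the old arm $\beta$, and the new arm $(\beta,\alpha)$. Two lines of play are considered the same iff for every $k$ the two arms joined at the $k$-th move have the same long labels in both. Otherwise they are distinct. *)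

theory Defs
  imports Main
begin

text \<open>Long labels: the original arm at point i has label Base i; an arc joining
arms a and b creates new arms Pair a b and Pair b a.\<close>
datatype lbl = Base nat | Pair lbl lbl

text \<open>A state of the game: the list of regions (faces) of the disk; each region is
represented by the cyclic sequence (listed clockwise, up to rotation) of the free
arms lying in it.  Since every drawn arc is connected to the boundary circle,
every region is a topological disk, so this describes the state completely.\<close>
type_synonym state = "lbl list list"

text \<open>One move: join free arms a and b lying in the same region r.  Rotating r to
the form a # X @ b # Y (clockwise), the arc splits r into a region containing the
arms X together with the new arm (a,b) and a region containing Y together with
the new arm (b,a).\<close>
inductive pbs_step :: "state \<Rightarrow> lbl set \<Rightarrow> state \<Rightarrow> bool" where
  "rotate k r = a # X @ b # Y \<Longrightarrow>
   pbs_step (A @ r # B) {a, b} (A @ (X @ [Pair a b]) # (Y @ [Pair b a]) # B)"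

definition pbs_final :: "state \<Rightarrow> bool" where
  "pbs_final s \<longleftrightarrow> \<not> (\<exists>m s'. pbs_step s m s')"

inductive pbs_play :: "state \<Rightarrow> lbl set list \<Rightarrow> bool" where
  stop: "pbs_final s \<Longrightarrow> pbs_play s []"
| move: "pbs_step s m s' \<Longrightarrow> pbs_play s' ms \<Longrightarrow> pbs_play s (m # ms)"

definition pbs_init :: "nat \<Rightarrow> state" where
  "pbs_init n = [map Base [1..<n+1]]"

definition pbs_lines :: "nat \<Rightarrow> nat" where
  "pbs_lines n = card {ms. pbs_play (pbs_init n) ms}"

end

theory Submission
  imports Defs Complex_Main "HOL-Library.Multiset"
begin

(* A state whose regions have L_1, ..., L_r free arms has exactly
     M! * prod_j w(L_j),   w(L) = L^(L-2) / (L-1)!,   M = sum_j (L_j - 1)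
   complete lines of play, M being the number of moves every line of play from it makes.  In a final state all L_j <= 1.  Otherwise expand over
   the first move: joining two arms at distance d in a region of size L (there are L - d
   such pairs) splits it into regions of sizes d and L - d, so the claim reduces to
     sum_{d=1}^{L-1} (L - d) w(d) w(L - d) = (L - 1) w(L),
   a form of Abel's binomial identity.  Distinct first moves yield distinct lines of play
   because the labels of the free arms stay pairwise distinct.  The initial state is one
   region with n arms, giving (n-1)! w(n) = n^(n-2). *)

section \<open>Abel's identity\<close>

lemma sum_binomial_Suc:
  fixes g :: "nat \<Rightarrow> 'a::comm_semiring_1"
  shows "(\<Sum>k\<le>Suc n. of_nat (Suc n choose k) * g k) =
         (\<Sum>k\<le>n. of_nat (n choose k) * g k) + (\<Sum>k\<le>n. of_nat (n choose k) * g (Suc k))"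
proof -
  have "(\<Sum>k\<le>Suc n. of_nat (Suc n choose k) * g k) =
        g 0 + (\<Sum>k\<le>n. of_nat (Suc n choose Suc k) * g (Suc k))"
    by (subst sum.atMost_Suc_shift) simp
  also have "\<dots> = (g 0 + (\<Sum>k\<le>n. of_nat (n choose Suc k) * g (Suc k)))
                  + (\<Sum>k\<le>n. of_nat (n choose k) * g (Suc k))"
    by (simp add: sum.distrib algebra_simps)
  also have "g 0 + (\<Sum>k\<le>n. of_nat (n choose Suc k) * g (Suc k)) = (\<Sum>k\<le>Suc n. of_nat (n choose k) * g k)"
    by (subst sum.atMost_Suc_shift) simp
  also have "\<dots> = (\<Sum>k\<le>n. of_nat (n choose k) * g k)"
    by (simp add: binomial_eq_0)
  finally show ?thesis .
qed

lemma alternating_binomial_power_sum_eq_0: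
  fixes a :: "'a::comm_ring_1"
  assumes "j < n"
  shows "(\<Sum>k\<le>n. of_nat (n choose k) * ((-1)^k * (of_nat k + a)^j)) = 0"
  using assms
proof (induction n arbitrary: j a)
  case 0
  then show ?case by simp
next
  case (Suc n)
  have binomial: "(of_nat k + a)^j - (of_nat k + a + 1)^j = - (\<Sum>i<j. of_nat (j choose i) * (of_nat k + a)^i)"
    for k
    using binomial_ring[of "of_nat k + a" 1 j] by (simp add: lessThan_Suc_atMost[symmetric])
  have "(\<Sum>k\<le>Suc n. of_nat (Suc n choose k) * ((-1)^k * (of_nat k + a)^j))
      = (\<Sum>k\<le>n. of_nat (n choose k) * ((-1)^k * ((of_nat k + a)^j - (of_nat k + a + 1)^j)))"
    by (subst sum_binomial_Suc) (simp add: sum.distrib[symmetric] algebra_simps)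
  also have "\<dots> = - (\<Sum>i<j. of_nat (j choose i) *
                     (\<Sum>k\<le>n. of_nat (n choose k) * ((-1)^k * (of_nat k + a)^i)))"
    unfolding binomial
    by (simp add: sum_distrib_left sum_negf sum.swap[of _ "{..n}"] algebra_simps)
  also have "\<dots> = 0"
    using Suc by simp
  finally show ?case .
qed

definition abel_sum :: "nat \<Rightarrow> real \<Rightarrow> real" where
  "abel_sum n y = (\<Sum>k\<le>n. real (n choose k) * real (k + 1)^(k - 1) * (y + real (n - k))^(n - k))"

lemma abel_sum_absorb:
  "(\<Sum>k\<le>Suc n. real (Suc n choose k) * real (k + 1)^(k - 1) *
       (real (Suc n - k) * (y + real (Suc n - k))^(n - k)))
   = real (Suc n) * abel_sum n (y + 1)"
proof -
  have absorb: "real (Suc n - k) * real (Suc n choose k) = real (Suc n) * real (n choose k)" for k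
    using binomial_absorb_comp[of "Suc n" k] by (metis diff_Suc_1 of_nat_mult)
  have "(\<Sum>k\<le>Suc n. real (Suc n choose k) * real (k + 1)^(k - 1) *
          (real (Suc n - k) * (y + real (Suc n - k))^(n - k)))
      = real (Suc n) * (\<Sum>k\<le>Suc n. real (n choose k) * real (k + 1)^(k - 1) * (y + real (Suc n - k))^(n - k))"
    unfolding sum_distrib_left
  proof (rule sum.cong[OF refl])
    fix k
    show "real (Suc n choose k) * real (k + 1)^(k - 1) * (real (Suc n - k) * (y + real (Suc n - k))^(n - k))
        = real (Suc n) * (real (n choose k) * real (k + 1)^(k - 1) * (y + real (Suc n - k))^(n - k))"
      using absorb[of k] by (simp only: ac_simps) (simp add: mult.assoc[symmetric])
  qed
  also have "(\<Sum>k\<le>Suc n. real (n choose k) * real (k + 1)^(k - 1) * (y + real (Suc n - k))^(n - k))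
      = abel_sum n (y + 1)"
    unfolding abel_sum_def by (auto intro!: sum.cong simp: Suc_diff_le binomial_eq_0 algebra_simps)
  finally show ?thesis .
qed

lemma abel_sum_deriv: "DERIV (abel_sum (Suc n)) y :> real (Suc n) * abel_sum n (y + 1)"
proof -
  have "DERIV (abel_sum (Suc n)) y :> (\<Sum>k\<le>Suc n. real (Suc n choose k) * real (k + 1)^(k - 1) *
          (real (Suc n - k) * (y + real (Suc n - k))^(n - k)))"
    unfolding abel_sum_def[abs_def]
    by (rule DERIV_cong, rule derivative_eq_intros, auto intro!: derivative_eq_intros sum.cong simp: ac_simps)
  then show ?thesis
    by (simp only: abel_sum_absorb)
qed

lemma abel_sum_root: "abel_sum (Suc n) (- real (Suc n) - 1) = 0"
proof -
  have "real (k + 1)^(k - 1) * (- real (Suc n) - 1 + real (Suc n - k))^(Suc n - k)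
        = (-1)^(Suc n) * ((-1)^k * (real k + 1)^n)" if "k \<le> Suc n" for k
  proof -
    have base: "- real (Suc n) - 1 + real (Suc n - k) = - (real k + 1)"
      using that by (simp add: of_nat_diff)
    have sign: "(-1::real)^(Suc n - k) = (-1)^(Suc n) * (-1)^k"
    proof -
      have "(-1::real)^(Suc n) = (-1)^(Suc n - k) * (-1)^k"
        using that by (simp add: power_add[symmetric])
      moreover have "(-1::real)^k * (-1)^k = 1"
        by (simp add: power_mult_distrib[symmetric])
      ultimately show ?thesis
        by (simp add: mult.assoc)
    qed
    have "real (k + 1)^(k - 1) * (real k + 1)^(Suc n - k) = (real k + 1)^n"
      using that by (cases k) (simp_all add: power_add[symmetric])
    then show ?thesis
      unfolding base power_minus[of "real k + 1"] sign by (simp add: algebra_simps)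
  qed
  then have "abel_sum (Suc n) (- real (Suc n) - 1)
      = (-1)^(Suc n) * (\<Sum>k\<le>Suc n. real (Suc n choose k) * ((-1)^k * (real k + 1)^n))"
    unfolding abel_sum_def sum_distrib_left by (auto intro!: sum.cong simp: algebra_simps)
  also have "\<dots> = 0"
    using alternating_binomial_power_sum_eq_0[of n "Suc n" "1::real"] by (simp del: sum.atMost_Suc)
  finally show ?thesis .
qed

theorem abel_identity: "abel_sum n y = (y + 1 + real n)^n"
proof (induction n arbitrary: y)
  case 0
  then show ?case by (simp add: abel_sum_def)
next
  case (Suc n)
  define f where "f y = abel_sum (Suc n) y - (y + 1 + real (Suc n))^(Suc n)" for y
  have "DERIV (\<lambda>y. (y + 1 + real (Suc n))^(Suc n)) x :> real (Suc n) * (x + 1 + real (Suc n))^n" for x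
  proof -
    have "DERIV (\<lambda>y. y + (1 + real (Suc n))) x :> 1"
      by (auto intro!: derivative_eq_intros)
    from DERIV_power_Suc[OF this, of n] show ?thesis
      by (simp add: add.assoc)
  qed
  then have "DERIV f x :> real (Suc n) * abel_sum n (x + 1) - real (Suc n) * (x + 1 + real (Suc n))^n" for x
    unfolding f_def[abs_def] by (intro DERIV_diff abel_sum_deriv)
  moreover have "real (Suc n) * abel_sum n (x + 1) = real (Suc n) * (x + 1 + real (Suc n))^n" for x
    using Suc.IH[of "x + 1"] by (simp add: algebra_simps)
  ultimately have "f y = f (- real (Suc n) - 1)"
    by (intro DERIV_isconst_all) auto
  then show ?case
    using abel_sum_root[of n] by (simp add: f_def)
qed

lemma abel_convolution:
  "real (m + 2) * (\<Sum>x\<le>m. real (m choose x) * real (x + 1)^(x - 1) * real (m - x + 1)^(m - x - 1))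
   = 2 * real (m + 2)^m"
proof (cases m)
  case 0
  then show ?thesis by simp
next
  case (Suc n)
  have split: "real (j + 1)^(j - 1) = (1 + real j)^j - real j * (1 + real j)^(j - 1)" for j
    by (cases j) (auto simp: algebra_simps)
  have "(\<Sum>x\<le>m. real (m choose x) * real (x + 1)^(x - 1) * real (m - x + 1)^(m - x - 1))
      = abel_sum (Suc n) 1 - (\<Sum>x\<le>Suc n. real (Suc n choose x) * real (x + 1)^(x - 1) *
                               (real (Suc n - x) * (1 + real (Suc n - x))^(n - x)))"
    unfolding abel_sum_def sum_subtractf[symmetric] Suc
    by (intro sum.cong refl, subst split) (simp add: algebra_simps)
  also have "\<dots> = (3 + real n)^(Suc n) - real (Suc n) * (3 + real n)^n"
    using abel_sum_absorb[of n 1] by (simp add: abel_identity add.commute)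
  also have "\<dots> = 2 * (3 + real n)^n"
    by (simp add: algebra_simps)
  finally show ?thesis
    using Suc by (simp add: algebra_simps)
qed

section \<open>The weight of a region\<close>

definition cayley_weight :: "nat \<Rightarrow> real" where
  "cayley_weight k = real k ^ (k - 2) / fact (k - 1)"

lemma cayley_weight_convolution:
  assumes "2 \<le> k"
  shows "real k * (\<Sum>d\<in>{1..<k}. cayley_weight d * cayley_weight (k - d)) = 2 * real (k - 1) * cayley_weight k"
proof -
  obtain m where k: "k = m + 2"
    using assms by (metis add.commute le_Suc_ex)
  have "(\<Sum>d\<in>{1..<k}. cayley_weight d * cayley_weight (k - d))
      = (\<Sum>x\<le>m. cayley_weight (x + 1) * cayley_weight (m + 1 - x))"
    unfolding k by (rule sum.reindex_bij_witness[where i="\<lambda>x. x + 1" and j="\<lambda>d. d - 1"]) auto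
  also have "\<dots> = (\<Sum>x\<le>m. real (m choose x) * real (x + 1)^(x - 1) * real (m - x + 1)^(m - x - 1)) / fact m"
    unfolding sum_divide_distrib
  proof (rule sum.cong[OF refl])
    fix x assume "x \<in> {..m}"
    then have "real (m choose x) = fact m / (fact x * fact (m - x))"
      and "m + 1 - x - 2 = m - x - 1" "m + 1 - x - 1 = m - x" "m + 1 - x = m - x + 1"
      by (auto simp: binomial_fact)
    then show "cayley_weight (x + 1) * cayley_weight (m + 1 - x)
             = real (m choose x) * real (x + 1)^(x - 1) * real (m - x + 1)^(m - x - 1) / fact m"
      unfolding cayley_weight_def by (simp add: field_simps)
  qed
  finally have "real k * (\<Sum>d\<in>{1..<k}. cayley_weight d * cayley_weight (k - d)) = 2 * real (m + 2)^m / fact m"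
    using abel_convolution[of m] by (simp add: k)
  also have "\<dots> = ((real m + 1) * (2 * real (m + 2)^m)) / ((real m + 1) * fact m)"
    by (rule mult_divide_mult_cancel_left[symmetric]) simp
  also have "\<dots> = 2 * real (k - 1) * cayley_weight k"
    by (simp add: k cayley_weight_def algebra_simps)
  finally show ?thesis .
qed

lemma sum_pairs_by_gap:
  fixes h :: "nat \<Rightarrow> 'a::comm_semiring_1"
  shows "(\<Sum>p<k. \<Sum>q\<in>{p<..<k}. h (q - p)) = (\<Sum>d\<in>{1..<k}. of_nat (k - d) * h d)"
proof (induction k)
  case 0
  then show ?case by simp
next
  case (Suc k)
  have "(\<Sum>p<Suc k. \<Sum>q\<in>{p<..<Suc k}. h (q - p)) = (\<Sum>p<k. \<Sum>q\<in>{p<..<k}. h (q - p)) + (\<Sum>p<k. h (k - p))"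
    by (simp add: sum.distrib[symmetric] atLeastSucLessThan_greaterThanLessThan[symmetric] sum.op_ivl_Suc)
  moreover have "(\<Sum>p<k. h (k - p)) = (\<Sum>d\<in>{1..<Suc k}. h d)"
    by (rule sum.reindex_bij_witness[where i="\<lambda>d. k - d" and j="\<lambda>p. k - p"]) auto
  moreover have "(\<Sum>d\<in>{1..<Suc k}. of_nat (Suc k - d) * h d)
               = (\<Sum>d\<in>{1..<k}. of_nat (k - d) * h d) + (\<Sum>d\<in>{1..<Suc k}. h d)"
    by (simp add: sum.distrib[symmetric] Suc_diff_le algebra_simps sum.op_ivl_Suc)
  ultimately show ?case
    using Suc.IH by simp
qed

lemma cayley_weight_split_sum:
  "(\<Sum>p<k. \<Sum>q\<in>{p<..<k}. cayley_weight (q - p) * cayley_weight (k - (q - p)))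
   = real (k - 1) * cayley_weight k"
proof (cases "2 \<le> k")
  case True
  define h where "h d = cayley_weight d * cayley_weight (k - d)" for d
  define S where "S = (\<Sum>d\<in>{1..<k}. real (k - d) * h d)"
  have "S = (\<Sum>d\<in>{1..<k}. real d * h d)"
    unfolding S_def h_def
    by (rule sum.reindex_bij_witness[where i="\<lambda>d. k - d" and j="\<lambda>d. k - d"]) (auto simp: mult.commute)
  then have "2 * S = S + (\<Sum>d\<in>{1..<k}. real d * h d)"
    by simp
  also have "\<dots> = real k * (\<Sum>d\<in>{1..<k}. h d)"
    unfolding S_def sum.distrib[symmetric] sum_distrib_left
    by (rule sum.cong) (auto simp: of_nat_diff algebra_simps)
  also have "\<dots> = 2 * real (k - 1) * cayley_weight k"
    unfolding h_def by (rule cayley_weight_convolution[OF True])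
  finally show ?thesis
    using sum_pairs_by_gap[of h k] by (simp add: S_def h_def)
next
  case False
  then show ?thesis
    by (cases k) auto
qed

section \<open>Joining two arms of a cyclic list\<close>

definition inner_segment :: "'a list \<Rightarrow> nat \<Rightarrow> nat \<Rightarrow> 'a list" where
  "inner_segment r p q = take (q - p - 1) (drop (Suc p) r)"

definition outer_segment :: "'a list \<Rightarrow> nat \<Rightarrow> nat \<Rightarrow> 'a list" where
  "outer_segment r p q = drop (Suc q) r @ take p r"

lemma length_inner_segment [simp]:
  "q < length r \<Longrightarrow> length (inner_segment r p q) = q - p - 1"
  by (simp add: inner_segment_def)

lemma length_outer_segment [simp]:
  "p < q \<Longrightarrow> q < length r \<Longrightarrow> length (outer_segment r p q) = length r - q - 1 + p"
  by (simp add: outer_segment_def)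

lemma rotate_split_segments:
  assumes "p < q" "q < length r"
  shows "rotate p r = r!p # inner_segment r p q @ r!q # outer_segment r p q"
proof -
  have "rotate p r = drop p r @ take p r"
    using assms by (simp add: rotate_drop_take)
  also have "drop p r = r!p # take (q - p - 1) (drop (Suc p) r) @ drop (q - p - 1) (drop (Suc p) r)"
    using assms by (simp add: Cons_nth_drop_Suc del: drop_drop)
  also have "drop (q - p - 1) (drop (Suc p) r) = r!q # drop (Suc q) r"
    using assms by (simp add: Cons_nth_drop_Suc)
  finally show ?thesis
    by (simp add: inner_segment_def outer_segment_def)
qed

lemma mset_rotate_split_segments:
  assumes "p < q" "q < length r"
  shows "mset r = mset (r!p # r!q # inner_segment r p q @ outer_segment r p q)"
proof -
  have "mset r = mset (rotate p r)"
    by (simp add: rotate_drop_take) (metis append_take_drop_id mset_append union_commute)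
  then show ?thesis
    unfolding rotate_split_segments[OF assms] by simp
qed

lemma rotate_eq_segments:
  assumes rot: "rotate p r = a # X @ b # Y" and q: "q = p + length X + 1" "q < length r"
  shows "r!p = a \<and> r!q = b \<and> inner_segment r p q = X \<and> outer_segment r p q = Y"
proof -
  have "a # X @ b # Y = r!p # inner_segment r p q @ r!q # outer_segment r p q"
    using rot rotate_split_segments[of p q r] q by simp
  moreover have "length (inner_segment r p q) = length X"
    using q by simp
  ultimately show ?thesis
    by (auto simp: append_eq_append_conv)
qed

lemma rotate_eq_cases:
  assumes rot: "rotate k r = a # X @ b # Y"
  obtains p q where "p < q" "q < length r" "r!p = a" "r!q = b"
      "inner_segment r p q = X" "outer_segment r p q = Y"
    | p q where "p < q" "q < length r" "r!p = b" "r!q = a"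
      "inner_segment r p q = Y" "outer_segment r p q = X"
proof -
  define L where "L = length r"
  have L: "L = length X + length Y + 2"
    using arg_cong[OF rot, of length] by (simp add: L_def)
  define p where "p = k mod L"
  have p: "p < L"
    using L by (simp add: p_def)
  have rot_p: "rotate p r = a # X @ b # Y"
    using rot by (metis L_def p_def rotate_conv_mod)
  show thesis
  proof (cases "p + length X + 1 < L")
    case True
    then show thesis
      using that(1)[of p "p + length X + 1"] rotate_eq_segments[OF rot_p refl] by (simp add: L_def)
  next
    case False
    define p' where "p' = p + length X + 1 - L"
    have "rotate p' r = rotate (p + length X + 1) r"
      using False p L by (subst (2) rotate_conv_mod) (simp add: p'_def L_def mod_if)
    also have "\<dots> = rotate (length (a # X)) ((a # X) @ (b # Y))"
      by (simp flip: rot_p add: rotate_rotate add.commute)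
    finally have rot_p': "rotate p' r = b # Y @ a # X"
      by (simp only: rotate_append) simp
    have "p = p' + length Y + 1" "p' < p"
      using False L p by (auto simp: p'_def)
    then show thesis
      using that(2)[of p' p] rotate_eq_segments[OF rot_p'] p by (simp add: L_def)
  qed
qed

section \<open>Unfolding lines of play at the first move\<close>

text \<open>A move is encoded by a triple (i, p, q): it joins the arms at positions p < q of
the i-th region.  pbs_step may list the two new regions in either order; join fixes one,
which is harmless because lines of play only depend on the multiset of regions
(lemma pbs_play_mset_eq).\<close>

definition joins :: "state \<Rightarrow> (nat \<times> nat \<times> nat) set" where
  "joins s = (SIGMA i:{..<length s}. SIGMA p:{..<length (s!i)}. {p<..<length (s!i)})"

fun joined_arms :: "state \<Rightarrow> nat \<times> nat \<times> nat \<Rightarrow> lbl set" where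
  "joined_arms s (i, p, q) = {s!i!p, s!i!q}"

fun join :: "state \<Rightarrow> nat \<times> nat \<times> nat \<Rightarrow> state" where
  "join s (i, p, q) =
     take i s @ (inner_segment (s!i) p q @ [Pair (s!i!p) (s!i!q)])
              # (outer_segment (s!i) p q @ [Pair (s!i!q) (s!i!p)]) # drop (Suc i) s"

lemma mem_joins: "(i, p, q) \<in> joins s \<longleftrightarrow> i < length s \<and> p < q \<and> q < length (s!i)"
  by (auto simp: joins_def)

lemma finite_joins: "finite (joins s)"
  unfolding joins_def by (intro finite_SigmaI) auto

lemma pbs_step_join:
  assumes "t \<in> joins s"
  shows "pbs_step s (joined_arms s t) (join s t)"
proof -
  obtain i p q where t: "t = (i, p, q)" and i: "i < length s" and pq: "p < q" "q < length (s!i)"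
    using assms by (cases t) (auto simp: mem_joins)
  have "s = take i s @ s!i # drop (Suc i) s"
    using i by (simp add: id_take_nth_drop)
  then show ?thesis
    unfolding t joined_arms.simps join.simps
    by (metis pbs_step.intros rotate_split_segments[OF pq])
qed

lemma pbs_step_imp_join:
  assumes "pbs_step s m s'"
  shows "\<exists>t\<in>joins s. m = joined_arms s t \<and> mset s' = mset (join s t)"
proof -
  obtain k r a X b Y A B where s: "s = A @ r # B" and rot: "rotate k r = a # X @ b # Y"
    and m: "m = {a, b}" and s': "s' = A @ (X @ [Pair a b]) # (Y @ [Pair b a]) # B"
    using assms by (cases rule: pbs_step.cases) blast
  have si: "s!length A = r" "take (length A) s = A" "drop (Suc (length A)) s = B"
    by (simp_all add: s)
  from rot show ?thesis
  proof (cases rule: rotate_eq_cases)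
    case (1 p q)
    then have "(length A, p, q) \<in> joins s"
      by (simp add: mem_joins s)
    with 1 show ?thesis
      by (intro bexI[of _ "(length A, p, q)"]) (simp_all add: si m s')
  next
    case (2 p q)
    then have "(length A, p, q) \<in> joins s"
      by (simp add: mem_joins s)
    with 2 show ?thesis
      by (intro bexI[of _ "(length A, p, q)"]) (simp_all add: si m s' insert_commute)
  qed
qed

lemma pbs_step_mset_eq:
  assumes "pbs_step s m s'" "mset s = mset u"
  shows "\<exists>u'. pbs_step u m u' \<and> mset s' = mset u'"
proof -
  obtain k r a X b Y A B where s: "s = A @ r # B" and rot: "rotate k r = a # X @ b # Y"
    and m: "m = {a, b}" and s': "s' = A @ (X @ [Pair a b]) # (Y @ [Pair b a]) # B"
    using assms(1) by (cases rule: pbs_step.cases) blast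
  have "r \<in> set u"
    using assms(2) s by (metis in_set_conv_decomp mset_eq_setD)
  then obtain A' B' where u: "u = A' @ r # B'"
    by (meson split_list)
  have "mset (A @ B) = mset (A' @ B')"
    using assms(2) unfolding s u by simp
  then have "mset s' = mset (A' @ (X @ [Pair a b]) # (Y @ [Pair b a]) # B')"
    unfolding s' by (simp add: union_assoc)
  moreover have "pbs_step u m (A' @ (X @ [Pair a b]) # (Y @ [Pair b a]) # B')"
    unfolding u m by (rule pbs_step.intros[OF rot])
  ultimately show ?thesis
    by blast
qed

lemma pbs_play_mset_eq: "pbs_play s ms \<Longrightarrow> mset s = mset u \<Longrightarrow> pbs_play u ms"
proof (induction arbitrary: u rule: pbs_play.induct)
  case (stop s)
  then show ?case
    by (metis pbs_final_def pbs_play.stop pbs_step_mset_eq)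
next
  case (move s m s' ms)
  then show ?case
    by (meson pbs_play.move pbs_step_mset_eq)
qed

lemma pbs_final_iff_joins_empty: "pbs_final s \<longleftrightarrow> joins s = {}"
  unfolding pbs_final_def using pbs_step_join pbs_step_imp_join by blast

definition plays :: "state \<Rightarrow> lbl set list set" where
  "plays s = {ms. pbs_play s ms}"

lemma plays_final: "joins s = {} \<Longrightarrow> plays s = {[]}"
  using pbs_final_iff_joins_empty
  by (auto simp: plays_def intro: pbs_play.stop) (metis pbs_final_def pbs_play.cases)

lemma plays_unfold:
  assumes "joins s \<noteq> {}"
  shows "plays s = (\<Union>t\<in>joins s. (#) (joined_arms s t) ` plays (join s t))"
proof -
  have "pbs_play s ms \<longleftrightarrow> (\<exists>t\<in>joins s. \<exists>ms'. ms = joined_arms s t # ms' \<and> pbs_play (join s t) ms')" for ms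
  proof
    assume "pbs_play s ms"
    then show "\<exists>t\<in>joins s. \<exists>ms'. ms = joined_arms s t # ms' \<and> pbs_play (join s t) ms'"
    proof cases
      case stop
      then show ?thesis
        using assms pbs_final_iff_joins_empty by simp
    next
      case (move m s' ms')
      then show ?thesis
        using pbs_step_imp_join pbs_play_mset_eq by metis
    qed
  qed (use pbs_step_join pbs_play.move in blast)
  then show ?thesis
    by (auto simp: plays_def)
qed

section \<open>Arm labels stay distinct\<close>

fun proper_sublabel :: "lbl \<Rightarrow> lbl \<Rightarrow> bool" where
  "proper_sublabel x (Base n) = False"
| "proper_sublabel x (Pair u v) = (x = u \<or> x = v \<or> proper_sublabel x u \<or> proper_sublabel x v)"

lemma proper_sublabel_size: "proper_sublabel x y \<Longrightarrow> size x < size y"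
  by (induction y) auto

lemma proper_sublabel_PairD: "proper_sublabel (Pair u v) y \<Longrightarrow> proper_sublabel u y"
  by (induction y) auto

text \<open>The second condition makes the labels of newly created arms fresh, which keeps
the labels distinct along every line of play.\<close>
definition well_labelled :: "state \<Rightarrow> bool" where
  "well_labelled s \<longleftrightarrow> distinct (concat s) \<and>
     (\<forall>x\<in>set (concat s). \<forall>y\<in>set (concat s). \<not> proper_sublabel x y)"

lemma distinct_concat_nth_inj:
  assumes "distinct (concat s)" "i < length s" "j < length s" "p < length (s!i)" "p' < length (s!j)"
    and "s!i!p = s!j!p'"
  shows "i = j \<and> p = p'"
  using assms
proof (induction s arbitrary: i j)
  case Nil
  then show ?case by simp
next
  case (Cons r s)
  then show ?case
    by (cases i; cases j) (auto simp: nth_eq_iff_index_eq disjoint_iff dest!: nth_mem)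
qed

lemma joined_arms_inj_on:
  assumes "distinct (concat s)"
  shows "inj_on (joined_arms s) (joins s)"
proof (rule inj_onI)
  fix t t' assume t: "t \<in> joins s" and t': "t' \<in> joins s" and eq: "joined_arms s t = joined_arms s t'"
  obtain i p q i' p' q' where tt: "t = (i, p, q)" "t' = (i', p', q')"
    by (cases t, cases t')
  have idx: "i < length s" "p < q" "q < length (s!i)" "i' < length s" "p' < q'" "q' < length (s!i')"
    using t t' by (simp_all add: tt mem_joins)
  note pos_inj = distinct_concat_nth_inj[OF assms]
  from eq consider "s!i!p = s!i'!p'" "s!i!q = s!i'!q'" | "s!i!p = s!i'!q'" "s!i!q = s!i'!p'"
    by (auto simp: tt doubleton_eq_iff)
  then show "t = t'"
  proof cases
    case 1
    then show ?thesis
      using pos_inj[of i i' p p'] pos_inj[of i i' q q'] idx by (simp add: tt)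
  next
    case 2
    then show ?thesis
      using pos_inj[of i i' p q'] pos_inj[of i i' q p'] idx by simp
  qed
qed

lemma mset_concat_join:
  assumes "(i, p, q) \<in> joins s"
  obtains R where "mset (concat s) = mset (s!i!p # s!i!q # R)"
    "mset (concat (join s (i, p, q))) = mset (Pair (s!i!p) (s!i!q) # Pair (s!i!q) (s!i!p) # R)"
proof
  have idx: "i < length s" "p < q" "q < length (s!i)"
    using assms by (simp_all add: mem_joins)
  have "concat s = concat (take i s) @ s!i @ concat (drop (Suc i) s)"
    using idx by (metis concat.simps(2) concat_append id_take_nth_drop)
  then show "mset (concat s) = mset (s!i!p # s!i!q #
      concat (take i s) @ inner_segment (s!i) p q @ outer_segment (s!i) p q @ concat (drop (Suc i) s))"
    using mset_rotate_split_segments[OF idx(2,3)] by simp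
qed (simp add: union_ac)

lemma well_labelled_join:
  assumes wl: "well_labelled s" and t: "t \<in> joins s"
  shows "well_labelled (join s t)"
proof -
  obtain i p q where tt: "t = (i, p, q)"
    by (cases t)
  define a b where "a = s!i!p" and "b = s!i!q"
  obtain R where old: "mset (concat s) = mset (a # b # R)"
    and new: "mset (concat (join s t)) = mset (Pair a b # Pair b a # R)"
    using mset_concat_join t unfolding tt a_def b_def by blast
  have old_set: "set (concat s) = {a, b} \<union> set R"
    using mset_eq_setD[OF old] by simp
  have old_distinct: "distinct (a # b # R)"
    using wl mset_eq_imp_distinct_iff[OF old] unfolding well_labelled_def by blast
  have no_sub: "\<forall>x\<in>{a, b} \<union> set R. \<forall>y\<in>{a, b} \<union> set R. \<not> proper_sublabel x y"
    using wl unfolding well_labelled_def old_set by blast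
  then have "Pair a b \<notin> set R" "Pair b a \<notin> set R"
    by force+
  then have "distinct (Pair a b # Pair b a # R)"
    using old_distinct by auto
  then have "distinct (concat (join s t))"
    using mset_eq_imp_distinct_iff[OF new] by simp
  moreover have "set (concat (join s t)) = {Pair a b, Pair b a} \<union> set R"
    using mset_eq_setD[OF new] by simp
  moreover have "\<not> proper_sublabel x y" if "x \<in> {Pair a b, Pair b a} \<union> set R" "y \<in> {Pair a b, Pair b a} \<union> set R" for x y
    using that no_sub old_distinct by (auto dest: proper_sublabel_PairD proper_sublabel_size)
  ultimately show ?thesis
    unfolding well_labelled_def by auto
qed

section \<open>Counting lines of play\<close>

definition moves_left :: "state \<Rightarrow> nat" where
  "moves_left s = (\<Sum>r\<leftarrow>s. length r - 1)"

definition region_weight :: "state \<Rightarrow> real" where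
  "region_weight s = (\<Prod>r\<leftarrow>s. cayley_weight (length r))"

text \<open>A region with k arms on its own has (k - 1)! * cayley_weight k = k^(k-2) lines of play,
and the lines of play of different regions interleave freely: hence the multinomial shape.\<close>
definition play_weight :: "state \<Rightarrow> real" where
  "play_weight s = fact (moves_left s) * region_weight s"

lemma moves_left_nth: "real (moves_left s) = (\<Sum>i<length s. real (length (s!i) - 1))"
  by (simp add: moves_left_def sum_list_sum_nth atLeast0LessThan)

lemma region_weight_nth:
  "i < length s \<Longrightarrow>
   region_weight s = region_weight (take i s) * cayley_weight (length (s!i)) * region_weight (drop (Suc i) s)"
  unfolding region_weight_def by (subst id_take_nth_drop[of i s]) simp_all

lemma
  assumes "(i, p, q) \<in> joins s"
  shows moves_left_join: "moves_left s = Suc (moves_left (join s (i, p, q)))"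
    and region_weight_join: "region_weight (join s (i, p, q)) =
      region_weight (take i s) * region_weight (drop (Suc i) s) *
      (cayley_weight (q - p) * cayley_weight (length (s!i) - (q - p)))"
proof -
  have idx: "i < length s" "p < q" "q < length (s!i)"
    using assms by (simp_all add: mem_joins)
  have "moves_left s = moves_left (take i s) + (length (s!i) - 1) + moves_left (drop (Suc i) s)"
    unfolding moves_left_def by (subst id_take_nth_drop[OF idx(1)]) simp
  then show "moves_left s = Suc (moves_left (join s (i, p, q)))"
    using idx by (simp add: moves_left_def)
  show "region_weight (join s (i, p, q)) = region_weight (take i s) * region_weight (drop (Suc i) s) *
      (cayley_weight (q - p) * cayley_weight (length (s!i) - (q - p)))"
    using idx by (simp add: region_weight_def Suc_diff_Suc)
qed

lemma sum_play_weight_join: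
  assumes "joins s \<noteq> {}"
  shows "(\<Sum>t\<in>joins s. play_weight (join s t)) = play_weight s"
proof -
  define M where "M = moves_left s - 1"
  have M: "moves_left (join s t) = M" if "t \<in> joins s" for t
    using that moves_left_join[of _ _ _ s] unfolding M_def by (cases t) fastforce
  have "moves_left s = Suc M"
    using assms moves_left_join[of _ _ _ s] unfolding M_def by fastforce
  have "(\<Sum>t\<in>joins s. play_weight (join s t))
      = (\<Sum>i<length s. \<Sum>p<length (s!i). \<Sum>q\<in>{p<..<length (s!i)}. play_weight (join s (i, p, q)))"
    unfolding joins_def by (simp add: sum.Sigma split_def del: join.simps)
  also have "\<dots> = (\<Sum>i<length s. fact M * region_weight s * real (length (s!i) - 1))"
  proof (rule sum.cong[OF refl])
    fix i assume "i \<in> {..<length s}"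
    then have i: "i < length s"
      by simp
    have "(\<Sum>p<length (s!i). \<Sum>q\<in>{p<..<length (s!i)}. play_weight (join s (i, p, q)))
        = fact M * region_weight (take i s) * region_weight (drop (Suc i) s) *
          (\<Sum>p<length (s!i). \<Sum>q\<in>{p<..<length (s!i)}.
             cayley_weight (q - p) * cayley_weight (length (s!i) - (q - p)))"
      unfolding sum_distrib_left using i
      by (intro sum.cong refl) (simp add: play_weight_def M region_weight_join mem_joins del: join.simps)
    also have "\<dots> = fact M * region_weight s * real (length (s!i) - 1)"
      unfolding cayley_weight_split_sum region_weight_nth[OF i] by (simp only: ac_simps)
    finally show "(\<Sum>p<length (s!i). \<Sum>q\<in>{p<..<length (s!i)}. play_weight (join s (i, p, q)))
        = fact M * region_weight s * real (length (s!i) - 1)" .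
  qed
  also have "\<dots> = fact M * region_weight s * real (moves_left s)"
    by (simp add: moves_left_nth sum_distrib_left)
  also have "\<dots> = play_weight s"
    using \<open>moves_left s = Suc M\<close> by (simp add: play_weight_def)
  finally show ?thesis .
qed

lemma play_weight_final:
  assumes "joins s = {}"
  shows "play_weight s = 1"
proof -
  have "\<forall>r\<in>set s. length r \<le> 1"
  proof (rule ccontr)
    assume "\<not> (\<forall>r\<in>set s. length r \<le> 1)"
    then obtain i where "i < length s" "1 < length (s!i)"
      by (auto simp: in_set_conv_nth)
    then have "(i, 0, 1) \<in> joins s"
      by (simp add: mem_joins)
    with assms show False
      by simp
  qed
  moreover have "cayley_weight k = 1" if "k \<le> 1" for k
    using that by (cases k) (auto simp: cayley_weight_def)
  ultimately have "moves_left s = 0 \<and> region_weight s = 1"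
    unfolding moves_left_def region_weight_def by (induction s) auto
  then show ?thesis
    by (simp add: play_weight_def)
qed

theorem card_plays:
  assumes "well_labelled s"
  shows "finite (plays s) \<and> real (card (plays s)) = play_weight s"
  using assms
proof (induction "moves_left s" arbitrary: s rule: less_induct)
  case less
  show ?case
  proof (cases "joins s = {}")
    case True
    then show ?thesis
      by (simp add: plays_final play_weight_final)
  next
    case False
    have IH: "finite (plays (join s t)) \<and> real (card (plays (join s t))) = play_weight (join s t)"
      if "t \<in> joins s" for t
      using less that well_labelled_join moves_left_join[of _ _ _ s] by (cases t) (metis lessI)
    have first_move_inj: "inj_on (joined_arms s) (joins s)"
      using less.prems joined_arms_inj_on by (simp add: well_labelled_def)
    have "finite (plays s)"
      using False IH by (simp add: plays_unfold finite_joins)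
    moreover have "card (plays s) = (\<Sum>t\<in>joins s. card (plays (join s t)))"
      unfolding plays_unfold[OF False]
      using IH first_move_inj
      by (subst card_UN_disjoint) (auto simp: finite_joins card_image inj_on_def)
    ultimately show ?thesis
      using IH sum_play_weight_join[OF False] by simp
  qed
qed

theorem theorem3:
  fixes n :: nat
  assumes "n \<ge> 1"
  shows "finite {ms. pbs_play (pbs_init n) ms} \<and> pbs_lines n = n ^ (n - 2)"
proof -
  have "well_labelled (pbs_init n)"
    by (simp add: well_labelled_def pbs_init_def distinct_map inj_on_def)
  moreover have "play_weight (pbs_init n) = real n ^ (n - 2)"
    using assms by (simp add: play_weight_def moves_left_def region_weight_def pbs_init_def cayley_weight_def)
  ultimately show ?thesis
    using card_plays unfolding pbs_lines_def plays_def by (metis of_nat_eq_iff of_nat_power)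
qed

end
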